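(* Every uncrossable family of cycles in a graph is strongly uncrossable.
   Context: Graphs may be directed or undirected; cycles are simple. For paths/cycles, $P+Q$ denotes the union (multiset sum) of edge sets and $C-P$ the edge set of $C$ minus that of $P$. A family $\mathcal{C}$ of cycles is uncrossable if for all $C_1,C_2\in\mathcal{C}$ and every path $P_2$ in $C_2$ sharing only its two endpoints with $C_1$, there is a path $P_1$ in $C_1$ between these endpoints with $P_1+P_2\in\mathcal{C}$ and such that $(C_1-P_1)+(C_2-P_2)$ contains a cycle of $\mathcal{C}$. The family $\mathcal{C}$ is strongly uncrossable if for all $C_1,C_2\in\mathcal{C}$ and any two vertices $v,w$ lying on both $C_1$ and $C_2$, there are a $v$-$w$-path $P_1$ in $C_1$ and a $v$-$w$-path $P_2$ in $C_2$ (subpaths of the cycles with endpoints $v,w$) such that both $P_1+P_2$ and $(C_1-P_1)+(C_2-P_2)$ contain (the edge set of) a cycle in $\mathcal{C}$. *)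

theory Defs
  imports Main
begin

text \<open>A (multi)graph, directed or undirected. Edges are abstract elements with a
tail and a head; in the undirected case an edge may be traversed either way.\<close>

record ('v, 'e) graph =
  gverts :: "'v set"
  gedges :: "'e set"
  gtail  :: "'e \<Rightarrow> 'v"
  ghead  :: "'e \<Rightarrow> 'v"
  gdirected :: bool

definition wf_graph :: "('v, 'e) graph \<Rightarrow> bool" where
  "wf_graph G \<longleftrightarrow> finite (gverts G) \<and> finite (gedges G) \<and>
     (\<forall>e\<in>gedges G. gtail G e \<in> gverts G \<and> ghead G e \<in> gverts G)"

definition step :: "('v, 'e) graph \<Rightarrow> 'e \<Rightarrow> 'v \<Rightarrow> 'v \<Rightarrow> bool" where
  "step G e x y \<longleftrightarrow> e \<in> gedges G \<and>
     ((gtail G e = x \<and> ghead G e = y) \<or> (\<not> gdirected G \<and> gtail G e = y \<and> ghead G e = x))"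

definition walk :: "('v, 'e) graph \<Rightarrow> 'v list \<Rightarrow> 'e list \<Rightarrow> bool" where
  "walk G vs es \<longleftrightarrow> length vs = Suc (length es) \<and>
     (\<forall>i < length es. step G (es ! i) (vs ! i) (vs ! Suc i))"

definition is_path :: "('v, 'e) graph \<Rightarrow> 'e set \<Rightarrow> 'v \<Rightarrow> 'v \<Rightarrow> bool" where
  "is_path G P v w \<longleftrightarrow> (\<exists>vs es. walk G vs es \<and> es \<noteq> [] \<and> distinct vs \<and>
     hd vs = v \<and> last vs = w \<and> set es = P)"

definition is_cycle :: "('v, 'e) graph \<Rightarrow> 'e set \<Rightarrow> bool" where
  "is_cycle G C \<longleftrightarrow> (\<exists>vs es. walk G vs es \<and> es \<noteq> [] \<and> distinct es \<and>
     distinct (tl vs) \<and> hd vs = last vs \<and> set es = C)"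

definition evs :: "('v, 'e) graph \<Rightarrow> 'e set \<Rightarrow> 'v set" where
  "evs G F = gtail G ` F \<union> ghead G ` F"

definition subpath :: "('v, 'e) graph \<Rightarrow> 'e set \<Rightarrow> 'e set \<Rightarrow> 'v \<Rightarrow> 'v \<Rightarrow> bool" where
  "subpath G C P v w \<longleftrightarrow> P \<subseteq> C \<and> (is_path G P v w \<or> is_path G P w v)"

definition cycle_family :: "('v, 'e) graph \<Rightarrow> 'e set set \<Rightarrow> bool" where
  "cycle_family G \<C> \<longleftrightarrow> (\<forall>C\<in>\<C>. is_cycle G C)"

text \<open>Multiset sums of edge sets are rendered via unions; P1+P2 being a cycle in the
family requires the sum to be a set, i.e. P1, P2 disjoint. "Contains a cycle" only
depends on the support, i.e. the union.\<close>
definition uncrossable :: "('v, 'e) graph \<Rightarrow> 'e set set \<Rightarrow> bool" where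
  "uncrossable G \<C> \<longleftrightarrow>
    (\<forall>C1\<in>\<C>. \<forall>C2\<in>\<C>. \<forall>P2 v w.
       subpath G C2 P2 v w \<and> evs G P2 \<inter> evs G C1 = {v, w} \<longrightarrow>
       (\<exists>P1. subpath G C1 P1 v w \<and> P1 \<inter> P2 = {} \<and> P1 \<union> P2 \<in> \<C> \<and>
          (\<exists>D\<in>\<C>. D \<subseteq> (C1 - P1) \<union> (C2 - P2))))"

definition strongly_uncrossable :: "('v, 'e) graph \<Rightarrow> 'e set set \<Rightarrow> bool" where
  "strongly_uncrossable G \<C> \<longleftrightarrow>
    (\<forall>C1\<in>\<C>. \<forall>C2\<in>\<C>. \<forall>v w.
       v \<noteq> w \<and> v \<in> evs G C1 \<and> w \<in> evs G C1 \<and> v \<in> evs G C2 \<and> w \<in> evs G C2 \<longrightarrow>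
       (\<exists>P1 P2. subpath G C1 P1 v w \<and> subpath G C2 P2 v w \<and>
          (\<exists>D\<in>\<C>. D \<subseteq> P1 \<union> P2) \<and>
          (\<exists>D\<in>\<C>. D \<subseteq> (C1 - P1) \<union> (C2 - P2))))"

end

theory Submission
  imports Defs
begin

(* Two vertices v, w of a cycle split it into exactly two v-w arcs. The key fact is that for
   every v-w path A inside a member C2 of the family and every member C1 through v and w, some
   v-w arc P of C1 makes P + A contain a member of the family. This goes by induction on |A|:
   the initial piece Q of A up to its first return y to C1 is an ear of C1, so uncrossability
   yields a v-y arc P1 of C1 with P1 + Q in the family. If w is not on P1, the v-w arc of C1
   containing P1 works; otherwise the induction hypothesis for the cycle P1 + Q and the rest of A
   gives an arc of P1 + Q, which is rerouted along C1.
   Applying the key fact to the arcs X, C1 - X of C1 against the arcs Y, C2 - Y of C2, in both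
   directions, forces one of the complementary pairings (X, Y) / (C1 - X, C2 - Y) or
   (X, C2 - Y) / (C1 - X, Y) to contain members of the family on both sides. *)

section \<open>Walks and paths\<close>

definition joins :: "('v, 'e) graph \<Rightarrow> 'e \<Rightarrow> 'v \<Rightarrow> 'v \<Rightarrow> bool" where
  "joins G e x y \<longleftrightarrow> {gtail G e, ghead G e} = {x, y}"

lemma step_joins: "step G e x y \<Longrightarrow> joins G e x y"
  by (auto simp: step_def joins_def)

lemma joins_sym: "joins G e x y \<longleftrightarrow> joins G e y x"
  by (auto simp: joins_def insert_commute)

lemma joins_unique: "joins G e x y \<Longrightarrow> joins G e x z \<Longrightarrow> y = z"
  by (auto simp: joins_def doubleton_eq_iff)

lemma evs_joins: "joins G e x y \<Longrightarrow> evs G {e} = {x, y}"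
  by (auto simp: joins_def evs_def)

lemma evs_mono: "P \<subseteq> Q \<Longrightarrow> evs G P \<subseteq> evs G Q"
  by (auto simp: evs_def)

lemma evs_Un: "evs G (P \<union> Q) = evs G P \<union> evs G Q"
  by (auto simp: evs_def)

lemma evs_UN: "evs G (\<Union>i\<in>I. F i) = (\<Union>i\<in>I. evs G (F i))"
  by (auto simp: evs_def)

lemma walk_length: "walk G us fs \<Longrightarrow> length us = Suc (length fs)"
  by (simp add: walk_def)

lemma walk_joins: "walk G us fs \<Longrightarrow> i < length fs \<Longrightarrow> joins G (fs ! i) (us ! i) (us ! Suc i)"
  by (auto simp: walk_def intro: step_joins)

lemma walk_take: "walk G us fs \<Longrightarrow> m \<le> length fs \<Longrightarrow> walk G (take (Suc m) us) (take m fs)"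
  by (auto simp: walk_def)

lemma walk_drop: "walk G us fs \<Longrightarrow> m \<le> length fs \<Longrightarrow> walk G (drop m us) (drop m fs)"
  by (auto simp: walk_def add.commute)

lemma walk_distinct_edges:
  assumes w: "walk G us fs" and d: "distinct us"
  shows "distinct fs"
proof -
  have "fs ! i \<noteq> fs ! j" if "i < j" "j < length fs" for i j
  proof
    assume "fs ! i = fs ! j"
    then have "{us ! i, us ! Suc i} = {us ! j, us ! Suc j}"
      using walk_joins[OF w, of i] walk_joins[OF w, of j] that by (simp add: joins_def)
    then show False
      using d that walk_length[OF w] by (auto simp: doubleton_eq_iff nth_eq_iff_index_eq)
  qed
  then show ?thesis
    by (metis distinct_conv_nth linorder_neqE_nat)
qed

lemma evs_walk:
  assumes w: "walk G us fs" and ne: "fs \<noteq> []"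
  shows "evs G (set fs) = set us"
proof -
  have L: "length us = Suc (length fs)"
    using walk_length[OF w] .
  have "set fs = (\<Union>i<length fs. {fs ! i})"
    by (auto simp: in_set_conv_nth)
  then have "evs G (set fs) = (\<Union>i<length fs. evs G {fs ! i})"
    by (simp add: evs_UN[symmetric])
  also have "\<dots> = (\<Union>i<length fs. {us ! i, us ! Suc i})"
    using walk_joins[OF w] by (intro SUP_cong) (simp_all add: evs_joins)
  also have "\<dots> = set us"
  proof (intro equalityI subsetI)
    fix x assume "x \<in> set us"
    then obtain j where "j < length us" "x = us ! j"
      by (auto simp: in_set_conv_nth)
    then show "x \<in> (\<Union>i<length fs. {us ! i, us ! Suc i})"
    proof (cases "j < length fs")
      case False
      then have "j = Suc (length fs - 1)" "length fs - 1 < length fs"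
        using L ne \<open>j < length us\<close> by auto
      then show ?thesis
        using \<open>x = us ! j\<close> by blast
    qed (use \<open>x = us ! j\<close> in blast)
  qed (use L in auto)
  finally show ?thesis .
qed

lemma is_path_take:
  assumes w: "walk G us fs" and d: "distinct us" and m: "0 < m" "m \<le> length fs"
  shows "is_path G (set (take m fs)) (us ! 0) (us ! m)"
  unfolding is_path_def
proof (intro exI conjI)
  show "walk G (take (Suc m) us) (take m fs)"
    using walk_take[OF w m(2)] .
  show "take m fs \<noteq> []" "distinct (take (Suc m) us)"
    using m d by auto
  show "hd (take (Suc m) us) = us ! 0"
    using walk_length[OF w] by (cases us) auto
  show "last (take (Suc m) us) = us ! m"
    using m walk_length[OF w] by (simp add: take_Suc_conv_app_nth)
qed simp

lemma is_path_drop: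
  assumes w: "walk G us fs" and d: "distinct us" and m: "m < length fs"
  shows "is_path G (set (drop m fs)) (us ! m) (last us)"
  unfolding is_path_def
  using walk_drop[OF w] m d walk_length[OF w]
  by (intro exI[of _ "drop m us"] exI[of _ "drop m fs"]) (auto simp: hd_drop_conv_nth)

lemma is_path_ends:
  assumes "is_path G P a b"
  shows "a \<noteq> b" "a \<in> evs G P" "b \<in> evs G P"
proof -
  obtain us fs where w: "walk G us fs" "fs \<noteq> []" "distinct us" "hd us = a" "last us = b" "set fs = P"
    using assms by (auto simp: is_path_def)
  have "us \<noteq> []" "length us = Suc (length fs)"
    using walk_length[OF w(1)] by auto
  moreover have "us ! 0 \<noteq> us ! length fs"
    using w(2,3) \<open>length us = Suc (length fs)\<close> by (simp add: nth_eq_iff_index_eq)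
  ultimately show "a \<noteq> b"
    using w by (simp add: hd_conv_nth last_conv_nth)
  have "a \<in> set us" "b \<in> set us"
    using w(4,5) \<open>us \<noteq> []\<close> by auto
  then show "a \<in> evs G P" "b \<in> evs G P"
    using evs_walk[OF w(1,2)] w(6) by simp_all
qed

lemma is_path_split:
  assumes P: "is_path G P a b" and c: "c \<in> evs G P" "c \<noteq> a" "c \<noteq> b"
  obtains P' P'' where "is_path G P' a c" "is_path G P'' c b" "P' \<union> P'' = P" "P' \<inter> P'' = {}"
proof -
  obtain us fs where w: "walk G us fs" "fs \<noteq> []" "distinct us" "hd us = a" "last us = b" "set fs = P"
    using P by (auto simp: is_path_def)
  have L: "length us = Suc (length fs)" and "us \<noteq> []"
    using walk_length[OF w(1)] by auto
  then have ends: "us ! 0 = a" "us ! length fs = b"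
    using w by (simp_all add: hd_conv_nth last_conv_nth)
  obtain m where m: "m < length us" "us ! m = c"
    using c(1) evs_walk[OF w(1,2)] w(6) by (auto simp: in_set_conv_nth)
  moreover have "m \<noteq> 0" "m \<noteq> length fs"
    using c(2,3) ends m(2) by metis+
  ultimately have "0 < m" "m < length fs"
    using L by simp_all
  show thesis
  proof
    show "is_path G (set (take m fs)) a c" "is_path G (set (drop m fs)) c b"
      using is_path_take[OF w(1,3) \<open>0 < m\<close> less_imp_le[OF \<open>m < length fs\<close>]]
        is_path_drop[OF w(1,3) \<open>m < length fs\<close>] ends m(2) w(5)
      by simp_all
    show "set (take m fs) \<union> set (drop m fs) = P"
      using w(6) by (metis append_take_drop_id set_append)
    show "set (take m fs) \<inter> set (drop m fs) = {}"
      using walk_distinct_edges[OF w(1,3)] by (simp add: set_take_disj_set_drop_if_distinct)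
  qed
qed

lemma subpath_sym: "subpath G C P a b \<longleftrightarrow> subpath G C P b a"
  by (auto simp: subpath_def)

lemma subpath_ends:
  assumes "subpath G C P a b"
  shows "a \<noteq> b" "a \<in> evs G P" "b \<in> evs G P"
  using assms is_path_ends[of G P a b] is_path_ends[of G P b a] by (auto simp: subpath_def)

lemma subpath_split:
  assumes P: "subpath G C P a b" and c: "c \<in> evs G P" "c \<noteq> a" "c \<noteq> b"
  obtains P' P'' where "subpath G C P' a c" "subpath G C P'' c b" "P' \<union> P'' = P" "P' \<inter> P'' = {}"
proof -
  have "P \<subseteq> C"
    using P by (simp add: subpath_def)
  from P consider "is_path G P a b" | "is_path G P b a"
    by (auto simp: subpath_def)
  then show thesis
  proof cases
    case 1
    obtain P' P'' where "is_path G P' a c" "is_path G P'' c b" "P' \<union> P'' = P" "P' \<inter> P'' = {}"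
      using is_path_split[OF 1 c] by blast
    with \<open>P \<subseteq> C\<close> have "subpath G C P' a c" "subpath G C P'' c b"
      by (auto simp: subpath_def)
    with \<open>P' \<union> P'' = P\<close> \<open>P' \<inter> P'' = {}\<close> show thesis
      using that by blast
  next
    case 2
    obtain P' P'' where "is_path G P' b c" "is_path G P'' c a" "P' \<union> P'' = P" "P' \<inter> P'' = {}"
      using is_path_split[OF 2 c(1) c(3) c(2)] by blast
    with \<open>P \<subseteq> C\<close> have "subpath G C P'' a c" "subpath G C P' c b"
      by (auto simp: subpath_def)
    with \<open>P' \<union> P'' = P\<close> \<open>P' \<inter> P'' = {}\<close> show thesis
      using that by blast
  qed
qed

section \<open>Periodic numbering of a cycle\<close>

definition cyclic_nth :: "'a list \<Rightarrow> int \<Rightarrow> 'a" where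
  "cyclic_nth xs i = xs ! nat (i mod int (length xs))"

lemma cyclic_nth_eq_iff:
  assumes "distinct xs" "xs \<noteq> []"
  shows "cyclic_nth xs i = cyclic_nth xs j \<longleftrightarrow> int (length xs) dvd i - j"
proof -
  have "nat (i mod int (length xs)) < length xs" "nat (j mod int (length xs)) < length xs"
    using assms(2) by (simp_all add: nat_less_iff)
  then have "cyclic_nth xs i = cyclic_nth xs j \<longleftrightarrow> i mod int (length xs) = j mod int (length xs)"
    using assms by (simp add: cyclic_nth_def nth_eq_iff_index_eq eq_nat_nat_iff)
  then show ?thesis
    by (simp add: mod_eq_dvd_iff)
qed

lemma range_cyclic_nth: "xs \<noteq> [] \<Longrightarrow> range (cyclic_nth xs) = set xs"
proof (intro equalityI subsetI)
  fix x assume "xs \<noteq> []" "x \<in> set xs"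
  then obtain k where "k < length xs" "x = xs ! k"
    by (auto simp: in_set_conv_nth)
  then have "x = cyclic_nth xs (int k)"
    by (simp add: cyclic_nth_def)
  then show "x \<in> range (cyclic_nth xs)"
    by simp
qed (auto simp: cyclic_nth_def nat_less_iff)

lemma cyclic_nth_succ:
  assumes "xs \<noteq> []"
  shows "cyclic_nth xs (i + 1) = (xs @ [hd xs]) ! Suc (nat (i mod int (length xs)))"
proof -
  define N where "N = int (length xs)"
  define r where "r = i mod N"
  have r: "0 \<le> r" "r < N"
    using assms by (simp_all add: r_def N_def)
  have "(i + 1) mod N = (r + 1) mod N"
    by (simp add: r_def mod_simps)
  then have "(i + 1) mod N = (if r + 1 = N then 0 else r + 1)"
    using r by auto
  then show ?thesis
    using r assms unfolding cyclic_nth_def N_def[symmetric] r_def[symmetric]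
    by (auto simp: N_def hd_conv_nth nth_append nat_add_distrib)
qed

(* A cycle of length n with its vertices and edges numbered periodically by the integers, so that
   arcs may wrap around. *)
definition cycle_enum :: "('v, 'e) graph \<Rightarrow> nat \<Rightarrow> (int \<Rightarrow> 'v) \<Rightarrow> (int \<Rightarrow> 'e) \<Rightarrow> bool" where
  "cycle_enum G n cv ce \<longleftrightarrow> 0 < n \<and>
     (\<forall>i j. cv i = cv j \<longleftrightarrow> int n dvd i - j) \<and> (\<forall>i j. ce i = ce j \<longleftrightarrow> int n dvd i - j) \<and>
     (\<forall>i. joins G (ce i) (cv i) (cv (i + 1)))"

lemma cycle_enumD:
  assumes "cycle_enum G n cv ce"
  shows "0 < n" "cv i = cv j \<longleftrightarrow> int n dvd i - j" "ce i = ce j \<longleftrightarrow> int n dvd i - j"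
    "joins G (ce i) (cv i) (cv (i + 1))"
  using assms by (simp_all add: cycle_enum_def)

lemma cycle_walk_butlast:
  assumes "walk G vs es" "es \<noteq> []" "distinct (tl vs)" "hd vs = last vs"
  shows "vs = butlast vs @ [hd (butlast vs)]" "length (butlast vs) = length es"
    "distinct (butlast vs)" "butlast vs \<noteq> []"
proof -
  have L: "length vs = Suc (length es)"
    using walk_length[OF assms(1)] .
  then obtain x rest where vs: "vs = x # rest"
    by (cases vs) auto
  have "rest \<noteq> []"
    using L assms(2) vs by auto
  then have x: "x = last rest" "butlast vs = x # butlast rest"
    using assms(4) vs by simp_all
  then have "rotate1 (butlast vs) = rest"
    using \<open>rest \<noteq> []\<close> by simp
  then show "distinct (butlast vs)"
    using assms(3) vs by (metis distinct1_rotate list.sel(3))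
  show "vs = butlast vs @ [hd (butlast vs)]"
    using x \<open>rest \<noteq> []\<close> vs by simp
  show "length (butlast vs) = length es"
    using L by simp
  show "butlast vs \<noteq> []"
    using x(2) by simp
qed

lemma cycle_enum_exists:
  assumes "is_cycle G C"
  obtains n cv ce where "cycle_enum G n cv ce" "\<And>i. step G (ce i) (cv i) (cv (i + 1))"
    "C = range ce" "evs G C = range cv"
proof -
  obtain vs es where c: "walk G vs es" "es \<noteq> []" "distinct es" "distinct (tl vs)" "hd vs = last vs"
    "set es = C"
    using assms by (auto simp: is_cycle_def)
  define ws where "ws = butlast vs"
  note ws = cycle_walk_butlast[OF c(1,2,4,5), folded ws_def]
  define n where "n = length es"
  have steps: "step G (cyclic_nth es i) (cyclic_nth ws i) (cyclic_nth ws (i + 1))" for i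
  proof -
    define k where "k = nat (i mod int n)"
    have "k < n"
      using c(2) by (simp add: k_def n_def nat_less_iff)
    then have "step G (es ! k) (vs ! k) (vs ! Suc k)"
      using c(1) by (simp add: walk_def n_def)
    moreover have "vs ! k = ws ! k"
      using \<open>k < n\<close> ws(2) by (subst ws(1)) (simp add: nth_append n_def)
    ultimately show ?thesis
      using cyclic_nth_succ[OF ws(4), of i] ws(1,2)
      by (simp add: cyclic_nth_def k_def n_def)
  qed
  show thesis
  proof
    show "cycle_enum G n (cyclic_nth ws) (cyclic_nth es)"
      unfolding cycle_enum_def
      using c(2,3) ws(2-4) step_joins[OF steps] by (simp add: n_def cyclic_nth_eq_iff)
    show "step G (cyclic_nth es i) (cyclic_nth ws i) (cyclic_nth ws (i + 1))" for i
      using steps .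
    show "C = range (cyclic_nth es)"
      using c(2,6) by (simp add: range_cyclic_nth)
    have "evs G C = set vs"
      using evs_walk[OF c(1,2)] c(6) by simp
    also have "\<dots> = set ws"
      using ws(4) by (subst ws(1)) auto
    finally show "evs G C = range (cyclic_nth ws)"
      using ws(4) by (simp add: range_cyclic_nth)
  qed
qed

lemma cycle_enum_mirror:
  assumes "cycle_enum G n cv ce"
  shows "cycle_enum G n (\<lambda>i. cv (- i)) (\<lambda>i. ce (- i - 1))"
proof -
  have "int n dvd a - b \<longleftrightarrow> int n dvd b - a" for a b :: int
    by (metis dvd_minus_iff minus_diff_eq)
  moreover have "joins G (ce (- i - 1)) (cv (- i)) (cv (- (i + 1)))" for i
    using cycle_enumD(4)[OF assms, of "- i - 1"] by (simp add: joins_sym)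
  ultimately show ?thesis
    using assms by (simp add: cycle_enum_def)
qed

lemma cycle_enum_edge_at:
  assumes e: "cycle_enum G n cv ce" and p: "cv p \<in> evs G {ce t}"
  shows "ce t = ce p \<or> ce t = ce (p - 1)"
proof -
  have "cv t = cv p \<or> cv (t + 1) = cv p"
    using p evs_joins[OF cycle_enumD(4)[OF e]] by auto
  then have "int n dvd t - p \<or> int n dvd t - (p - 1)"
    using cycle_enumD(2)[OF e] by (simp add: algebra_simps)
  then show ?thesis
    using cycle_enumD(3)[OF e] by blast
qed

lemma periodic_inj_on:
  assumes "\<And>a b. f a = f b \<longleftrightarrow> int n dvd a - b"
  shows "inj_on (\<lambda>t. f (i + int t)) {..<n}"
proof (rule inj_onI)
  fix a b assume ab: "a \<in> {..<n}" "b \<in> {..<n}" "f (i + int a) = f (i + int b)"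
  then have "int n dvd int a - int b"
    using assms by simp
  moreover have "\<bar>int a - int b\<bar> < int n"
    using ab by auto
  ultimately show "a = b"
    using dvd_imp_le_int[of "int a - int b" "int n"] by fastforce
qed

section \<open>Arcs of a cycle\<close>

definition arc :: "(int \<Rightarrow> 'e) \<Rightarrow> int \<Rightarrow> nat \<Rightarrow> 'e set" where
  "arc ce i k = (\<lambda>t. ce (i + int t)) ` {..<k}"

lemma arc_shift: "arc ce (i + int k) l = (\<lambda>t. ce (i + int t)) ` {k..<k + l}"
proof -
  have "{k..<k + l} = (\<lambda>t. k + t) ` {..<l}"
    by (simp add: lessThan_atLeast0 image_add_atLeastLessThan add.commute)
  then show ?thesis
    by (simp add: arc_def image_image add.assoc)
qed

lemma arc_periodic:
  assumes "cycle_enum G n cv ce" "int n dvd i - p"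
  shows "arc ce i k = arc ce p k"
proof -
  have "ce (i + int t) = ce (p + int t)" for t
    using cycle_enumD(3)[OF assms(1)] assms(2) by simp
  then show ?thesis
    by (simp add: arc_def)
qed

lemma arc_full:
  assumes e: "cycle_enum G n cv ce"
  shows "arc ce i n = range ce"
proof (intro equalityI subsetI)
  fix x assume "x \<in> range ce"
  then obtain u where u: "x = ce u"
    by blast
  define t where "t = nat ((u - i) mod int n)"
  have "t < n"
    using cycle_enumD(1)[OF e] by (simp add: t_def nat_less_iff)
  moreover have "u - (i + int t) = int n * ((u - i) div int n)"
    using cycle_enumD(1)[OF e] by (simp add: t_def minus_mod_eq_mult_div[symmetric])
  then have "x = ce (i + int t)"
    using u cycle_enumD(3)[OF e] by simp
  ultimately show "x \<in> arc ce i n"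
    by (auto simp: arc_def)
qed (auto simp: arc_def)

lemma arc_compl:
  assumes e: "cycle_enum G n cv ce" and k: "k \<le> n"
  shows "range ce - arc ce i k = arc ce (i + int k) (n - k)"
proof -
  have "(\<lambda>t. ce (i + int t)) ` ({..<n} - {..<k}) = arc ce i n - arc ce i k"
    unfolding arc_def using k
    by (intro inj_on_image_set_diff[OF periodic_inj_on[OF cycle_enumD(3)[OF e]]]) auto
  then have "range ce - arc ce i k = (\<lambda>t. ce (i + int t)) ` ({..<n} - {..<k})"
    by (simp add: arc_full[OF e])
  also have "{..<n} - {..<k} = {k..<k + (n - k)}"
    using k by auto
  finally show ?thesis
    by (simp add: arc_shift)
qed

lemma arc_mirror: "arc (\<lambda>i. ce (- i - 1)) s k = arc ce (- s - int k) k"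
proof -
  have "ce (- (s + int t) - 1) = ce (- s - int k + int (k - 1 - t))" if "t < k" for t
    using that by (simp add: of_nat_diff algebra_simps)
  then have "arc (\<lambda>i. ce (- i - 1)) s k = (\<lambda>t. ce (- s - int k + int t)) ` (\<lambda>t. k - 1 - t) ` {..<k}"
    by (simp add: arc_def image_image)
  also have "(\<lambda>t. k - 1 - t) ` {..<k} = {..<k}"
  proof (intro equalityI subsetI)
    fix x assume "x \<in> {..<k}"
    then show "x \<in> (\<lambda>t. k - 1 - t) ` {..<k}"
      by (intro rev_image_eqI[of "k - 1 - x"]) auto
  qed auto
  finally show ?thesis
    by (simp add: arc_def)
qed

lemma arc_is_path:
  assumes e: "cycle_enum G n cv ce" and fw: "\<And>i. step G (ce i) (cv i) (cv (i + 1))"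
    and k: "0 < k" "k < n"
  shows "is_path G (arc ce i k) (cv i) (cv (i + int k))"
  unfolding is_path_def
proof (intro exI conjI)
  let ?vs = "map (\<lambda>t. cv (i + int t)) [0..<Suc k]" and ?es = "map (\<lambda>t. ce (i + int t)) [0..<k]"
  show "walk G ?vs ?es"
    using fw[of "i + int _"] by (simp add: walk_def add.assoc add.commute[of 1] del: upt_Suc)
  have "inj_on (\<lambda>t. cv (i + int t)) {..<n}"
    using periodic_inj_on[OF cycle_enumD(2)[OF e]] .
  then show "distinct ?vs"
    using k by (simp add: distinct_map del: upt_Suc) (auto intro: inj_on_subset)
  show "?es \<noteq> []" "set ?es = arc ce i k"
    using k by (simp_all add: arc_def atLeast0LessThan)
  show "hd ?vs = cv i"
    by (simp add: hd_map del: upt_Suc)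
  show "last ?vs = cv (i + int k)"
    by simp
qed

lemma walk_along_cycle_enum:
  assumes e: "cycle_enum G n cv ce" and w: "walk G us fs" and d: "distinct us"
    and sub: "set fs \<subseteq> range ce" and start: "us ! 0 = cv i" "fs ! 0 = ce i"
  shows "j < length fs \<Longrightarrow> fs ! j = ce (i + int j) \<and> us ! Suc j = cv (i + int j + 1)"
proof (induction j)
  case 0
  then have "joins G (ce i) (cv i) (us ! 1)"
    using walk_joins[OF w] start by fastforce
  then show ?case
    using joins_unique[OF _ cycle_enumD(4)[OF e]] start by simp
next
  case (Suc j)
  then have IH: "fs ! j = ce (i + int j)" "us ! Suc j = cv (i + int j + 1)"
    by simp_all
  obtain t where t: "fs ! Suc j = ce t"
    using sub Suc.prems nth_mem by blast
  have "us ! Suc j \<in> evs G {fs ! Suc j}"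
    using evs_joins[OF walk_joins[OF w Suc.prems]] by simp
  then have "fs ! Suc j = ce (i + int j + 1) \<or> fs ! Suc j = ce (i + int j)"
    using cycle_enum_edge_at[OF e] IH(2) t by fastforce
  moreover have "fs ! Suc j \<noteq> fs ! j"
    using walk_distinct_edges[OF w d] Suc.prems by (simp add: nth_eq_iff_index_eq)
  ultimately have "fs ! Suc j = ce (i + int (Suc j))"
    using IH(1) by (auto simp: ac_simps)
  moreover have "joins G (ce (i + int (Suc j))) (cv (i + int (Suc j))) (us ! Suc (Suc j))"
    using walk_joins[OF w Suc.prems] calculation IH(2) by (simp add: ac_simps)
  then have "us ! Suc (Suc j) = cv (i + int (Suc j) + 1)"
    using joins_unique[OF _ cycle_enumD(4)[OF e]] by blast
  ultimately show ?case
    by simp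
qed

lemma walk_in_cycle_enum_is_arc:
  assumes e: "cycle_enum G n cv ce" and w: "walk G us fs" and d: "distinct us"
    and sub: "set fs \<subseteq> range ce" and ne: "fs \<noteq> []" and start: "us ! 0 = cv i" "fs ! 0 = ce i"
  shows "set fs = arc ce i (length fs)" "last us = cv (i + int (length fs))" "length fs < n"
proof -
  note along = walk_along_cycle_enum[OF e w d sub start]
  have L: "length us = Suc (length fs)"
    using walk_length[OF w] .
  have "set fs = (\<lambda>j. fs ! j) ` {..<length fs}"
    by (auto simp: in_set_conv_nth)
  also have "\<dots> = arc ce i (length fs)"
    unfolding arc_def using along by (intro image_cong) auto
  finally show "set fs = arc ce i (length fs)" .
  have us_nth: "us ! j = cv (i + int j)" if "0 < j" "j \<le> length fs" for j
    using along[of "j - 1"] that by (simp add: of_nat_diff)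
  have "us \<noteq> []"
    using L by auto
  then have "last us = us ! length fs"
    using L by (simp add: last_conv_nth)
  then show "last us = cv (i + int (length fs))"
    using us_nth ne by simp
  show "length fs < n"
  proof (rule ccontr)
    assume "\<not> length fs < n"
    then have "us ! n = us ! 0"
      using us_nth[of n] start(1) cycle_enumD(1,2)[OF e] by simp
    then show False
      using d L \<open>\<not> length fs < n\<close> cycle_enumD(1)[OF e] by (simp add: nth_eq_iff_index_eq)
  qed
qed

lemma path_in_cycle_enum_is_arc:
  assumes e: "cycle_enum G n cv ce" and P: "is_path G P a b" and sub: "P \<subseteq> range ce"
  obtains i k where "0 < k" "k < n" "P = arc ce i k" "{cv i, cv (i + int k)} = {a, b}"
proof -
  obtain us fs where w: "walk G us fs" "fs \<noteq> []" "distinct us" "hd us = a" "last us = b" "set fs = P"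
    using P by (auto simp: is_path_def)
  have "us \<noteq> []"
    using walk_length[OF w(1)] by auto
  then have a: "us ! 0 = a"
    using w(4) by (simp add: hd_conv_nth)
  obtain t where t: "fs ! 0 = ce t"
    using sub w(2,6) nth_mem by blast
  have "a \<in> evs G {ce t}"
    using evs_joins[OF walk_joins[OF w(1), of 0]] w(2) a t by simp
  then consider "a = cv t" | "a = cv (t + 1)"
    using evs_joins[OF cycle_enumD(4)[OF e]] by blast
  then show thesis
  proof cases
    case 1
    note arc = walk_in_cycle_enum_is_arc[OF e w(1,3) _ w(2) _ t]
    show thesis
      by (rule that[of "length fs" t]) (use arc 1 a w sub in auto)
  next
    case 2
    \<comment> \<open>The path runs against the numbering: trace it in the mirrored one.\<close>
    define s where "s = - t - 1"
    have "range ce \<subseteq> range (\<lambda>i. ce (- i - 1))"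
      by (auto intro: range_eqI[where x = "- _ - 1"])
    note arc = walk_in_cycle_enum_is_arc[OF cycle_enum_mirror[OF e] w(1,3) _ w(2), of s]
    then have "P = arc ce (t + 1 - int (length fs)) (length fs)"
      "cv (t + 1 - int (length fs)) = b" "length fs < n"
      using 2 a t sub w(5,6) \<open>range ce \<subseteq> _\<close> by (auto simp: s_def arc_mirror algebra_simps)
    then show thesis
      using 2 w(2) by (intro that[of "length fs" "t + 1 - int (length fs)"]) auto
  qed
qed

lemma subpath_in_cycle_enum_is_arc:
  assumes e: "cycle_enum G n cv ce" and P: "subpath G (range ce) P a b"
  obtains i k where "0 < k" "k < n" "P = arc ce i k" "{cv i, cv (i + int k)} = {a, b}"
proof -
  have sub: "P \<subseteq> range ce"
    using P by (simp add: subpath_def)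
  from P consider "is_path G P a b" | "is_path G P b a"
    by (auto simp: subpath_def)
  then show thesis
  proof cases
    case 1
    then show thesis
      by (rule path_in_cycle_enum_is_arc[OF e _ sub]) (rule that)
  next
    case 2
    then obtain i k where "0 < k" "k < n" "P = arc ce i k" "{cv i, cv (i + int k)} = {b, a}"
      by (rule path_in_cycle_enum_is_arc[OF e _ sub])
    then show thesis
      by (intro that[of k i]) (simp_all add: insert_commute)
  qed
qed

lemma arc_eq_by_ends:
  assumes e: "cycle_enum G n cv ce" and "k < n" "d < n"
    and "cv i = cv p" "cv (i + int k) = cv (p + int d)"
  shows "arc ce i k = arc ce p d"
proof -
  have "int n dvd i - p"
    using assms(4) cycle_enumD(2)[OF e] by blast
  then have "cv (p + int k) = cv (i + int k)"
    using cycle_enumD(2)[OF e] by (metis add_diff_cancel_right dvd_minus_iff minus_diff_eq)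
  then have "k = d"
    using inj_onD[OF periodic_inj_on[OF cycle_enumD(2)[OF e]], of p k d] assms(2,3,5) by simp
  then show ?thesis
    using arc_periodic[OF e \<open>int n dvd i - p\<close>] by simp
qed

lemma cycle_enum_subpath_cases:
  assumes e: "cycle_enum G n cv ce" and d: "0 < d" "d < n"
    and P: "subpath G (range ce) P (cv p) (cv (p + int d))"
  shows "P = arc ce p d \<or> P = arc ce (p + int d) (n - d)"
proof -
  obtain i k where ik: "k < n" "P = arc ce i k" "{cv i, cv (i + int k)} = {cv p, cv (p + int d)}"
    by (rule subpath_in_cycle_enum_is_arc[OF e P])
  have wrap: "cv (p + int d + int (n - d)) = cv p"
    using d cycle_enumD(2)[OF e] by (simp add: of_nat_diff)
  from ik(3) consider "cv i = cv p" "cv (i + int k) = cv (p + int d)"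
    | "cv i = cv (p + int d)" "cv (i + int k) = cv p"
    by (auto simp: doubleton_eq_iff)
  then show ?thesis
  proof cases
    case 1
    then show ?thesis
      using arc_eq_by_ends[OF e ik(1) d(2)] ik(2) by simp
  next
    case 2
    then show ?thesis
      using arc_eq_by_ends[OF e ik(1), of "n - d" i "p + int d"] ik(2) wrap d by simp
  qed
qed

lemma cycle_enum_vertex_pair:
  assumes e: "cycle_enum G n cv ce" and "a \<noteq> b" "a \<in> range cv" "b \<in> range cv"
  obtains p d where "0 < d" "d < n" "a = cv p" "b = cv (p + int d)"
proof -
  obtain p q where pq: "a = cv p" "b = cv q"
    using assms(3,4) by blast
  define d where "d = nat ((q - p) mod int n)"
  have "d < n"
    using cycle_enumD(1)[OF e] by (simp add: d_def nat_less_iff)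
  have "q - (p + int d) = int n * ((q - p) div int n)"
    using cycle_enumD(1)[OF e] by (simp add: d_def minus_mod_eq_mult_div[symmetric])
  then have "b = cv (p + int d)"
    using pq(2) cycle_enumD(2)[OF e] by simp
  moreover from this have "0 < d"
    using pq(1) assms(2) by (cases d) auto
  ultimately show thesis
    using that pq(1) \<open>d < n\<close> by blast
qed

theorem cycle_subpaths:
  assumes C: "is_cycle G C" and ab: "a \<noteq> b" "a \<in> evs G C" "b \<in> evs G C"
  obtains S where "S \<subseteq> C" "{P. subpath G C P a b} = {S, C - S}"
proof -
  obtain n cv ce where e: "cycle_enum G n cv ce" and fw: "\<And>i. step G (ce i) (cv i) (cv (i + 1))"
    and Ce: "C = range ce" and Cv: "evs G C = range cv"
    using cycle_enum_exists[OF C] by metis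
  have "a \<in> range cv" "b \<in> range cv"
    using ab Cv by auto
  then obtain p d where d: "0 < d" "d < n" and pd: "a = cv p" "b = cv (p + int d)"
    by (rule cycle_enum_vertex_pair[OF e ab(1)])
  define S where "S = arc ce p d"
  have S: "S \<subseteq> C"
    using Ce by (auto simp: S_def arc_def)
  have CS: "C - S = arc ce (p + int d) (n - d)"
    using arc_compl[OF e, of d p] d Ce by (simp add: S_def)
  have "cv (p + int d + int (n - d)) = a"
    using pd d cycle_enumD(2)[OF e] by (simp add: of_nat_diff)
  then have "is_path G (C - S) b a"
    using arc_is_path[OF e fw, of "n - d" "p + int d"] d pd CS by simp
  then have "subpath G C (C - S) a b"
    by (auto simp: subpath_def)
  moreover have "subpath G C S a b"
    using arc_is_path[OF e fw d] S pd by (simp add: subpath_def S_def)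
  moreover have "P = S \<or> P = C - S" if "subpath G C P a b" for P
    using cycle_enum_subpath_cases[OF e d, of P] that Ce pd CS by (simp add: S_def)
  ultimately have "{P. subpath G C P a b} = {S, C - S}"
    by blast
  with S show thesis
    by (rule that)
qed

lemma subpaths_of_cycle:
  assumes C: "is_cycle G C" and P: "subpath G C P a b"
  shows "{Q. subpath G C Q a b} = {P, C - P}"
proof -
  have "a \<noteq> b" "a \<in> evs G C" "b \<in> evs G C"
    using subpath_ends[OF P] evs_mono[of P C G] P by (auto simp: subpath_def)
  then obtain S where S: "S \<subseteq> C" "{Q. subpath G C Q a b} = {S, C - S}"
    by (rule cycle_subpaths[OF C])
  moreover have "P \<in> {S, C - S}"
    using P unfolding S(2)[symmetric] by simp
  ultimately show ?thesis
    by (auto simp: double_diff)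
qed

lemma subpath_cycle_compl: "is_cycle G C \<Longrightarrow> subpath G C P a b \<Longrightarrow> subpath G C (C - P) a b"
  using subpaths_of_cycle[of G C P a b] by (simp add: set_eq_iff)

lemma subpath_cycle_cases:
  "is_cycle G C \<Longrightarrow> subpath G C P a b \<Longrightarrow> subpath G C Q a b \<Longrightarrow> Q = P \<or> Q = C - P"
  using subpaths_of_cycle[of G C P a b] by (simp add: set_eq_iff)

lemma subpath_cycle_through:
  assumes C: "is_cycle G C" and P: "subpath G C P a b" and c: "c \<in> evs G C" "c \<notin> evs G P"
  obtains X where "subpath G C X a c" "P \<subseteq> X"
proof -
  have "P \<subseteq> C"
    using P by (simp add: subpath_def)
  then have "evs G C = evs G P \<union> evs G (C - P)"
    by (metis Diff_partition evs_Un)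
  then have "c \<in> evs G (C - P)"
    using c by blast
  moreover have "c \<noteq> a" "c \<noteq> b"
    using subpath_ends[OF P] c(2) by auto
  ultimately obtain U U' where U: "subpath G C U a c" "subpath G C U' c b" "U \<union> U' = C - P"
    "U \<inter> U' = {}"
    by (rule subpath_split[OF subpath_cycle_compl[OF C P]])
  show thesis
  proof
    show "subpath G C (C - U) a c"
      using subpath_cycle_compl[OF C U(1)] .
    show "P \<subseteq> C - U"
      using U(3) \<open>P \<subseteq> C\<close> by blast
  qed
qed

section \<open>Uncrossable families\<close>

lemma path_first_hit:
  assumes A: "is_path G A v w" and w: "w \<in> V"
  obtains y Q where "is_path G Q v y" "Q \<subseteq> A" "y \<in> V" "evs G Q \<inter> V \<subseteq> {v, y}"
    "Q = A \<and> y = w \<or> (\<exists>A'. is_path G A' y w \<and> A' \<subset> A)"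
proof -
  obtain us fs where p: "walk G us fs" "fs \<noteq> []" "distinct us" "hd us = v" "last us = w" "set fs = A"
    using A by (auto simp: is_path_def)
  have L: "length us = Suc (length fs)" and "us \<noteq> []"
    using walk_length[OF p(1)] by auto
  then have ends: "us ! 0 = v" "us ! length fs = w"
    using p(4,5) by (simp_all add: hd_conv_nth last_conv_nth)
  define j where "j = (LEAST j. 0 < j \<and> us ! j \<in> V)"
  have hit: "0 < length fs \<and> us ! length fs \<in> V"
    using p(2) ends w by simp
  then have j: "0 < j" "us ! j \<in> V" "j \<le> length fs"
    using LeastI[of "\<lambda>j. 0 < j \<and> us ! j \<in> V", OF hit]
      Least_le[of "\<lambda>j. 0 < j \<and> us ! j \<in> V", OF hit]
    by (simp_all add: j_def)
  define Q where "Q = set (take j fs)"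
  have Q: "is_path G Q v (us ! j)"
    using is_path_take[OF p(1,3) j(1,3)] ends by (simp add: Q_def)
  have "evs G Q = set (take (Suc j) us)"
    using evs_walk[OF walk_take[OF p(1) j(3)]] j p(2) by (simp add: Q_def)
  moreover have "us ! i \<in> {v, us ! j}" if "i \<le> j" "us ! i \<in> V" for i
  proof -
    have "i = 0 \<or> i = j"
      using not_less_Least[of i "\<lambda>j. 0 < j \<and> us ! j \<in> V"] that by (auto simp: j_def[symmetric])
    then show ?thesis
      using ends by auto
  qed
  ultimately have "evs G Q \<inter> V \<subseteq> {v, us ! j}"
    using L j(3) by (fastforce simp: in_set_conv_nth less_Suc_eq_le)
  moreover have "Q = A \<and> us ! j = w \<or> (\<exists>A'. is_path G A' (us ! j) w \<and> A' \<subset> A)"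
  proof (cases "j = length fs")
    case False
    then have "j < length fs"
      using j(3) by simp
    have "set (drop j fs) \<subset> A"
    proof
      show "set (drop j fs) \<subseteq> A"
        using p(6) by (auto dest: in_set_dropD)
      have "fs ! 0 \<notin> set (drop j fs)"
        using walk_distinct_edges[OF p(1,3)] j(1) p(2) by (auto simp: in_set_conv_nth nth_eq_iff_index_eq)
      moreover have "fs ! 0 \<in> A"
        using p(2,6) nth_mem[of 0 fs] by simp
      ultimately show "set (drop j fs) \<noteq> A"
        by blast
    qed
    then show ?thesis
      using is_path_drop[OF p(1,3) \<open>j < length fs\<close>] p(5) by blast
  qed (use p(6) ends in \<open>simp add: Q_def\<close>)
  moreover have "Q \<subseteq> A"
    using p(6) by (auto simp: Q_def dest: in_set_takeD)
  ultimately show thesis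
    using that[OF Q _ j(2)] by blast
qed

lemma uncrossable_first_ear:
  assumes un: "uncrossable G \<C>" and C: "C1 \<in> \<C>" "C2 \<in> \<C>" and A: "A \<subseteq> C2" "is_path G A v w"
    and vw: "v \<in> evs G C1" "w \<in> evs G C1"
  obtains y Q P1 where "Q \<subseteq> A" "y \<in> evs G Q" "subpath G C1 P1 v y" "P1 \<union> Q \<in> \<C>"
    "Q = A \<and> y = w \<or> (\<exists>A'. is_path G A' y w \<and> A' \<subset> A)"
proof -
  obtain y Q where Q: "is_path G Q v y" "Q \<subseteq> A" "y \<in> evs G C1" "evs G Q \<inter> evs G C1 \<subseteq> {v, y}"
    and rest: "Q = A \<and> y = w \<or> (\<exists>A'. is_path G A' y w \<and> A' \<subset> A)"
    by (rule path_first_hit[OF A(2) vw(2)])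
  have "subpath G C2 Q v y"
    using Q(1,2) A(1) by (auto simp: subpath_def)
  moreover have "evs G Q \<inter> evs G C1 = {v, y}"
    using Q is_path_ends[OF Q(1)] vw(1) by auto
  ultimately obtain P1 where "subpath G C1 P1 v y" "P1 \<union> Q \<in> \<C>"
    using un C unfolding uncrossable_def by blast
  then show thesis
    using that Q(2) is_path_ends(3)[OF Q(1)] rest by blast
qed

lemma ear_arc_choice:
  assumes C1: "is_cycle G C1" and K: "is_cycle G (P1 \<union> Q)" and P1: "subpath G C1 P1 v y"
    and w: "w \<in> evs G P1" "w \<noteq> v" "w \<noteq> y" and R: "subpath G (P1 \<union> Q) R y w"
  obtains X where "subpath G C1 X v w" "R \<subseteq> X \<union> Q"
proof -
  obtain X0 R1 where X0: "subpath G C1 X0 v w" and R1: "subpath G C1 R1 w y"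
    and split: "X0 \<union> R1 = P1" "X0 \<inter> R1 = {}"
    by (rule subpath_split[OF P1 w])
  have "subpath G (P1 \<union> Q) R1 y w"
    using R1 split by (auto simp: subpath_def)
  from subpath_cycle_cases[OF K this R] show thesis
  proof
    assume "R = R1"
    then have "R \<subseteq> (C1 - X0) \<union> Q"
      using split R1 by (auto simp: subpath_def)
    then show thesis
      using that subpath_cycle_compl[OF C1 X0] by blast
  next
    assume "R = P1 \<union> Q - R1"
    then have "R \<subseteq> X0 \<union> Q"
      using split by blast
    then show thesis
      using that X0 by blast
  qed
qed

lemma uncrossable_path_closes:
  assumes cf: "cycle_family G \<C>" and un: "uncrossable G \<C>" and C2: "C2 \<in> \<C>"
  shows "C1 \<in> \<C> \<Longrightarrow> A \<subseteq> C2 \<Longrightarrow> is_path G A v w \<Longrightarrow> v \<in> evs G C1 \<Longrightarrow> w \<in> evs G C1 \<Longrightarrow>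
    \<exists>P. subpath G C1 P v w \<and> (\<exists>D\<in>\<C>. D \<subseteq> P \<union> A)"
proof (induction "card A" arbitrary: C1 A v w rule: less_induct)
  case less
  have C1: "is_cycle G C1"
    using cf less.prems(1) by (simp add: cycle_family_def)
  obtain y Q P1 where Q: "Q \<subseteq> A" "y \<in> evs G Q" and P1: "subpath G C1 P1 v y" and K: "P1 \<union> Q \<in> \<C>"
    and rest: "Q = A \<and> y = w \<or> (\<exists>A'. is_path G A' y w \<and> A' \<subset> A)"
    by (rule uncrossable_first_ear[OF un less.prems(1) C2 less.prems(2-5)])
  from rest show ?case
  proof (elim disjE conjE exE)
    assume "Q = A" "y = w"
    then show ?thesis
      using P1 K by blast
  next
    fix A' assume A': "is_path G A' y w" "A' \<subset> A"
    have "w \<noteq> v" "w \<noteq> y"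
      using is_path_ends[OF less.prems(3)] is_path_ends[OF A'(1)] by auto
    show ?thesis
    proof (cases "w \<in> evs G P1")
      case False
      then obtain X where X: "subpath G C1 X v w" "P1 \<subseteq> X"
        using subpath_cycle_through[OF C1 P1 less.prems(5)] by blast
      then have "P1 \<union> Q \<subseteq> X \<union> A"
        using Q(1) by blast
      then show ?thesis
        using X(1) K by blast
    next
      case True
      have "card A' < card A"
        using A'(2) less.prems(3) by (auto simp: is_path_def intro: psubset_card_mono)
      moreover have "y \<in> evs G (P1 \<union> Q)" "w \<in> evs G (P1 \<union> Q)"
        using Q(2) True by (simp_all add: evs_Un)
      ultimately obtain R D where R: "subpath G (P1 \<union> Q) R y w" "D \<in> \<C>" "D \<subseteq> R \<union> A'"
        using less.hyps[of A' "P1 \<union> Q" y w] K A' less.prems(2) by blast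
      have "is_cycle G (P1 \<union> Q)"
        using cf K by (simp add: cycle_family_def)
      then obtain X where "subpath G C1 X v w" "R \<subseteq> X \<union> Q"
        by (rule ear_arc_choice[OF C1 _ P1 True \<open>w \<noteq> v\<close> \<open>w \<noteq> y\<close> R(1)])
      moreover have "D \<subseteq> X \<union> A"
        using R(3) Q(1) A'(2) calculation(2) by blast
      ultimately show ?thesis
        using R(2) by blast
    qed
  qed
qed

lemma uncrossable_subpath_closes:
  assumes cf: "cycle_family G \<C>" and un: "uncrossable G \<C>" and C: "C1 \<in> \<C>" "C2 \<in> \<C>"
    and Z: "subpath G C2 Z v w" and vw: "v \<in> evs G C1" "w \<in> evs G C1"
  obtains P where "subpath G C1 P v w" "\<exists>D\<in>\<C>. D \<subseteq> P \<union> Z"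
proof -
  have ZC: "Z \<subseteq> C2"
    using Z by (simp add: subpath_def)
  from Z consider "is_path G Z v w" | "is_path G Z w v"
    by (auto simp: subpath_def)
  then show thesis
  proof cases
    case 1
    then show thesis
      using uncrossable_path_closes[OF cf un C(2) C(1) ZC 1 vw] that by blast
  next
    case 2
    then show thesis
      using uncrossable_path_closes[OF cf un C(2) C(1) ZC 2 vw(2,1)] that subpath_sym by metis
  qed
qed

lemma uncrossable_closes_an_arc:
  assumes cf: "cycle_family G \<C>" and un: "uncrossable G \<C>" and C: "C1 \<in> \<C>" "C2 \<in> \<C>"
    and X: "subpath G C1 X v w" and Z: "subpath G C2 Z v w"
  shows "(\<exists>D\<in>\<C>. D \<subseteq> X \<union> Z) \<or> (\<exists>D\<in>\<C>. D \<subseteq> (C1 - X) \<union> Z)"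
proof -
  have "v \<in> evs G C1" "w \<in> evs G C1"
    using subpath_ends[OF X] evs_mono[of X C1 G] X by (auto simp: subpath_def)
  then obtain P where P: "subpath G C1 P v w" "\<exists>D\<in>\<C>. D \<subseteq> P \<union> Z"
    by (rule uncrossable_subpath_closes[OF cf un C Z])
  have "is_cycle G C1"
    using cf C(1) by (simp add: cycle_family_def)
  then have "P = X \<or> P = C1 - X"
    using subpath_cycle_cases[OF _ X P(1)] by blast
  then show ?thesis
    using P(2) by blast
qed

theorem theorem4p4:
  fixes G :: "('v, 'e) graph" and \<C> :: "'e set set"
  assumes "wf_graph G" and "cycle_family G \<C>" and "uncrossable G \<C>"
  shows "strongly_uncrossable G \<C>"
  unfolding strongly_uncrossable_def
proof (intro ballI allI impI, elim conjE)
  fix C1 C2 v w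
  assume C: "C1 \<in> \<C>" "C2 \<in> \<C>" and "v \<noteq> w"
    and vw: "v \<in> evs G C1" "w \<in> evs G C1" "v \<in> evs G C2" "w \<in> evs G C2"
  define closes where "closes P Z \<longleftrightarrow> (\<exists>D\<in>\<C>. D \<subseteq> P \<union> Z)" for P Z
  note closes = uncrossable_closes_an_arc[OF assms(2,3), folded closes_def]
  have cyc: "is_cycle G C1" "is_cycle G C2"
    using assms(2) C by (simp_all add: cycle_family_def)
  obtain X Y where X: "subpath G C1 X v w" and Y: "subpath G C2 Y v w"
    using cycle_subpaths[OF cyc(1) \<open>v \<noteq> w\<close> vw(1,2)] cycle_subpaths[OF cyc(2) \<open>v \<noteq> w\<close> vw(3,4)]
    by (metis insertI1 mem_Collect_eq)
  note X' = subpath_cycle_compl[OF cyc(1) X] and Y' = subpath_cycle_compl[OF cyc(2) Y]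
  have "closes X Y \<or> closes (C1 - X) Y" "closes X (C2 - Y) \<or> closes (C1 - X) (C2 - Y)"
    using closes[OF C X Y] closes[OF C X Y'] .
  moreover have "closes X Y \<or> closes X (C2 - Y)" "closes (C1 - X) Y \<or> closes (C1 - X) (C2 - Y)"
    using closes[OF C(2,1) Y X] closes[OF C(2,1) Y X'] unfolding closes_def by (simp_all only: Un_commute)
  ultimately have "closes X Y \<and> closes (C1 - X) (C2 - Y) \<or> closes X (C2 - Y) \<and> closes (C1 - X) Y"
    by blast
  then show "\<exists>P1 P2. subpath G C1 P1 v w \<and> subpath G C2 P2 v w \<and>
      (\<exists>D\<in>\<C>. D \<subseteq> P1 \<union> P2) \<and> (\<exists>D\<in>\<C>. D \<subseteq> C1 - P1 \<union> (C2 - P2))"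
  proof (elim disjE conjE)
    assume "closes X Y" "closes (C1 - X) (C2 - Y)"
    then show ?thesis
      using X Y unfolding closes_def by (intro exI[of _ X] exI[of _ Y] conjI)
  next
    assume "closes X (C2 - Y)" "closes (C1 - X) Y"
    moreover have "C2 - (C2 - Y) = Y"
      using Y by (auto simp: subpath_def)
    ultimately show ?thesis
      using X Y' unfolding closes_def by (intro exI[of _ X] exI[of _ "C2 - Y"] conjI) simp_all
  qed
qed

end
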